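(* Let $x$ be a propositional variable and $\bot$ denote the constant $0$. Then (i) $x\leftrightarrow(\Box x)^2,\ \Box(x\leftrightarrow(\Box x)^2),\ \neg\Diamond\Box\bot\ \vdash_{4\mathcal{K}_{\omega\text{Ł}}}\ \neg x\vee x$; and (ii) $x\leftrightarrow(\Box x)^2,\ \Box(x\leftrightarrow(\Box x)^2),\ \neg\Diamond\Box\bot\ \not\vdash_{4\mathcal{K}_{\text{Ł}}}\ \neg x\vee x$.
   Context: $[0,1]_{\text{Ł}}$ is the standard MV-algebra on $[0,1]$ ($\wedge=\min$, $\vee=\max$, $a\cdot b=\max\{0,a+b-1\}$, $a\to b=\min\{1,1-a+b\}$, constants $0,1$); for $n\ge1$, $MV_n$ is its subalgebra on $\{0,\frac1n,\dots,\frac nn\}$. Modal formulas use $\wedge,\vee,\cdot,\to,0,1,\Box,\Diamond$; $x^2=x\cdot x$, $\neg x=x\to0$, $x\leftrightarrow y=(x\to y)\cdot(y\to x)$. An $\mathbf{A}$-Kripke model is $\langle W,R,e\rangle$ with $W\ne\emptyset$, crisp $R\subseteq W^2$, $e$ valuing variables at worlds in $\mathbf{A}$, extended world-wise homomorphically and by $e(v,\Box\varphi)=\inf_{Rvw}e(w,\varphi)$, $e(v,\Diamond\varphi)=\sup_{Rvw}e(w,\varphi)$ (the model being safe, i.e. these exist). $4\mathcal{K}_{\text{Ł}}$ is the class of $[0,1]_{\text{Ł}}$-Kripke models with transitive $R$; $4\mathcal{K}_{\omega\text{Ł}}$ is the class of safe Kripke models with transitive $R$ over some $MV_n$, $n\in\omega$.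 $\Gamma\vdash_{\mathcal{C}}\varphi$ means: for every model in $\mathcal{C}$ and world $v$, if all formulas of $\Gamma$ have value $1$ at $v$ then $\varphi$ has value $1$ at $v$. *)

theory Defs
  imports Main "HOL.Real"
begin

datatype fm =
    Var nat
  | Zero
  | One
  | Conj fm fm
  | Disj fm fm
  | Prod fm fm
  | Imp fm fm
  | Box fm
  | Dia fm

definition Sq :: "fm \<Rightarrow> fm" where "Sq x = Prod x x"
definition Neg :: "fm \<Rightarrow> fm" where "Neg x = Imp x Zero"
definition Iff :: "fm \<Rightarrow> fm \<Rightarrow> fm" where "Iff x y = Prod (Imp x y) (Imp y x)"

definition luk_prod :: "real \<Rightarrow> real \<Rightarrow> real" where "luk_prod a b = max 0 (a + b - 1)"
definition luk_imp :: "real \<Rightarrow> real \<Rightarrow> real" where "luk_imp a b = min 1 (1 - a + b)"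

text \<open>Box/Dia are the infimum/supremum over R-successors in W, computed in the complete
  lattice [0,1] (so the empty infimum is 1 and the empty supremum is 0).\<close>
primrec ev :: "'w set \<Rightarrow> ('w \<times> 'w) set \<Rightarrow> ('w \<Rightarrow> nat \<Rightarrow> real) \<Rightarrow> fm \<Rightarrow> 'w \<Rightarrow> real" where
  "ev W R e (Var p) = (\<lambda>w. e w p)"
| "ev W R e Zero = (\<lambda>w. 0)"
| "ev W R e One = (\<lambda>w. 1)"
| "ev W R e (Conj a b) = (\<lambda>w. min (ev W R e a w) (ev W R e b w))"
| "ev W R e (Disj a b) = (\<lambda>w. max (ev W R e a w) (ev W R e b w))"
| "ev W R e (Prod a b) = (\<lambda>w. luk_prod (ev W R e a w) (ev W R e b w))"
| "ev W R e (Imp a b) = (\<lambda>w. luk_imp (ev W R e a w) (ev W R e b w))"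
| "ev W R e (Box a) = (\<lambda>w. if {v \<in> W. (w, v) \<in> R} = {} then 1
        else Inf ((\<lambda>v. ev W R e a v) ` {v \<in> W. (w, v) \<in> R}))"
| "ev W R e (Dia a) = (\<lambda>w. if {v \<in> W. (w, v) \<in> R} = {} then 0
        else Sup ((\<lambda>v. ev W R e a v) ` {v \<in> W. (w, v) \<in> R}))"

definition MVn :: "nat \<Rightarrow> real set" where
  "MVn n = {real k / real n | k. k \<le> n}"

definition trans_model :: "real set \<Rightarrow> 'w set \<Rightarrow> ('w \<times> 'w) set \<Rightarrow> ('w \<Rightarrow> nat \<Rightarrow> real) \<Rightarrow> bool" where
  "trans_model A W R e \<longleftrightarrow> W \<noteq> {} \<and> R \<subseteq> W \<times> W \<and> trans R \<and> (\<forall>w\<in>W. \<forall>p. e w p \<in> A)"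

text \<open>Class 4K_L: transitive [0,1]_L-models (always safe, [0,1] being complete).\<close>
definition in_4K_L :: "'w set \<Rightarrow> ('w \<times> 'w) set \<Rightarrow> ('w \<Rightarrow> nat \<Rightarrow> real) \<Rightarrow> bool" where
  "in_4K_L W R e \<longleftrightarrow> trans_model {0..1} W R e"

text \<open>Class 4K_omegaL: transitive MV_n-models for some n >= 1 (always safe, MV_n being finite).\<close>
definition in_4K_omegaL :: "'w set \<Rightarrow> ('w \<times> 'w) set \<Rightarrow> ('w \<Rightarrow> nat \<Rightarrow> real) \<Rightarrow> bool" where
  "in_4K_omegaL W R e \<longleftrightarrow> (\<exists>n\<ge>1. trans_model (MVn n) W R e)"

definition conseq :: "'w itself \<Rightarrow> ('w set \<Rightarrow> ('w \<times> 'w) set \<Rightarrow> ('w \<Rightarrow> nat \<Rightarrow> real) \<Rightarrow> bool)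
    \<Rightarrow> fm set \<Rightarrow> fm \<Rightarrow> bool" where
  "conseq _ C \<Gamma> \<phi> \<longleftrightarrow> (\<forall>W R e. C W R e \<longrightarrow>
      (\<forall>v\<in>W. (\<forall>\<gamma>\<in>\<Gamma>. ev W R e \<gamma> v = 1) \<longrightarrow> ev W R e \<phi> v = 1))"

end

theory Submission
  imports Defs
begin

text \<open>(i) Let the fixpoint axiom \<open>x \<leftrightarrow> (\<box>x)\<^sup>2\<close> hold at \<open>v\<close> and at all its successors,
  each of which has a successor by \<open>\<not>\<diamond>\<box>\<bottom>\<close>. Over \<open>MV\<^sub>n\<close> every infimum is attained, so a
  successor \<open>w\<close> with \<open>0 < x(w) < 1\<close> has a successor \<open>u\<close> (again a successor of \<open>v\<close>, by
  transitivity) with \<open>x(w) = 2x(u) - 1\<close>, whence \<open>x(w) < x(u) < 1\<close>. The largest such value in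
  the finite algebra admits no strictly larger one, so \<open>x\<close> is \<open>{0,1}\<close>-valued on the successors
  of \<open>v\<close>, and then at \<open>v\<close> too.
  (ii) On \<open>(\<nat>, <)\<close> the values \<open>x(i) = 1 - 2^-(i+1)\<close> satisfy \<open>x(i) = 2x(i+1) - 1\<close>, where
  \<open>x(i+1)\<close> is the infimum of \<open>x\<close> over the successors of \<open>i\<close>, but \<open>x(0) = 1/2\<close>.\<close>

definition succs :: "'w set \<Rightarrow> ('w \<times> 'w) set \<Rightarrow> 'w \<Rightarrow> 'w set" where
  "succs W R w = {u \<in> W. (w, u) \<in> R}"

lemma ev_Box_succs:
  "ev W R e (Box \<phi>) w = (if succs W R w = {} then 1 else Inf (ev W R e \<phi> ` succs W R w))"
  unfolding succs_def by (simp only: ev.simps)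

lemma ev_Dia_succs:
  "ev W R e (Dia \<phi>) w = (if succs W R w = {} then 0 else Sup (ev W R e \<phi> ` succs W R w))"
  unfolding succs_def by (simp only: ev.simps)

declare ev.simps(8,9) [simp del]

lemma ev_Box_const:
  assumes "succs W R w \<noteq> {}" and "\<And>u. u \<in> succs W R w \<Longrightarrow> ev W R e \<phi> u = c"
  shows "ev W R e (Box \<phi>) w = c"
proof -
  have "ev W R e \<phi> ` succs W R w = {c}" using assms by auto
  then show ?thesis using assms(1) by (simp add: ev_Box_succs)
qed

lemma ev_Dia_const:
  assumes "succs W R w \<noteq> {}" and "\<And>u. u \<in> succs W R w \<Longrightarrow> ev W R e \<phi> u = c"
  shows "ev W R e (Dia \<phi>) w = c"
proof -
  have "ev W R e \<phi> ` succs W R w = {c}" using assms by auto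
  then show ?thesis using assms(1) by (simp add: ev_Dia_succs)
qed

lemma ev_Box_eq_oneD:
  assumes "ev W R e (Box \<phi>) w = 1" and "u \<in> succs W R w"
    and "\<And>u. u \<in> succs W R w \<Longrightarrow> 0 \<le> ev W R e \<phi> u \<and> ev W R e \<phi> u \<le> 1"
  shows "ev W R e \<phi> u = 1"
proof -
  have "bdd_below (ev W R e \<phi> ` succs W R w)"
    using assms(3) by (intro bdd_belowI[of _ 0]) auto
  then have "ev W R e (Box \<phi>) w \<le> ev W R e \<phi> u"
    using assms(2) by (auto simp: ev_Box_succs intro: cInf_lower)
  then show ?thesis using assms by force
qed

lemma luk_iff_eq_one_iff: "luk_prod (luk_imp a b) (luk_imp b a) = 1 \<longleftrightarrow> a = b"
  by (auto simp: luk_prod_def luk_imp_def)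

lemma ev_Iff_eq_one_iff: "ev W R e (Iff \<phi> \<psi>) w = 1 \<longleftrightarrow> ev W R e \<phi> w = ev W R e \<psi> w"
  by (simp add: Iff_def luk_iff_eq_one_iff)

lemma ev_Iff_bounds: "0 \<le> ev W R e (Iff \<phi> \<psi>) w \<and> ev W R e (Iff \<phi> \<psi>) w \<le> 1"
  by (simp add: Iff_def luk_prod_def luk_imp_def)

lemma ev_Box_Iff_eq_oneD:
  assumes "ev W R e (Box (Iff \<phi> \<psi>)) w = 1" and "u \<in> succs W R w"
  shows "ev W R e \<phi> u = ev W R e \<psi> u"
  using ev_Box_eq_oneD[OF assms ev_Iff_bounds] by (simp add: ev_Iff_eq_one_iff)

lemma ev_Neg_Dia_Box_Zero_eq_oneD:
  assumes "ev W R e (Neg (Dia (Box Zero))) w = 1" and "u \<in> succs W R w"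
  shows "succs W R u \<noteq> {}"
proof
  assume "succs W R u = {}"
  then have "ev W R e (Box Zero) u = 1" by (simp add: ev_Box_succs)
  moreover have "bdd_above (ev W R e (Box Zero) ` succs W R w)"
    by (intro bdd_aboveI[of _ 1]) (auto simp: ev_Box_succs)
  ultimately have "1 \<le> ev W R e (Dia (Box Zero)) w"
    using assms(2) by (auto simp: ev_Dia_succs intro: cSup_upper2)
  then show False using assms(1) by (simp add: Neg_def luk_imp_def)
qed

lemma ev_Box_Var_attained:
  assumes "succs W R w \<noteq> {}" and "finite ((\<lambda>u. e u p) ` succs W R w)"
  obtains u where "u \<in> succs W R w" and "ev W R e (Box (Var p)) w = e u p"
proof -
  have "ev W R e (Box (Var p)) w = Min ((\<lambda>u. e u p) ` succs W R w)"
    using assms by (simp add: ev_Box_succs cInf_eq_Min)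
  moreover have "Min ((\<lambda>u. e u p) ` succs W R w) \<in> (\<lambda>u. e u p) ` succs W R w"
    using assms by (intro Min_in) auto
  ultimately show ?thesis using that by auto
qed

lemma succs_trans: "trans R \<Longrightarrow> u \<in> succs W R w \<Longrightarrow> succs W R u \<subseteq> succs W R w"
  unfolding succs_def trans_def by blast

lemma finite_MVn: "finite (MVn n)"
proof -
  have "MVn n = (\<lambda>k. real k / real n) ` {..n}" unfolding MVn_def by auto
  then show ?thesis by simp
qed

lemma MVn_subset_unit_interval: "MVn n \<subseteq> {0..1}"
  unfolding MVn_def by (auto simp: divide_le_eq_1)

lemma luk_square_interior_decreasing:
  assumes "a \<le> 1" and "0 < luk_prod a a" and "luk_prod a a < 1"
  shows "luk_prod a a < a \<and> 0 < a \<and> a < 1"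
  using assms by (simp add: luk_prod_def)

lemma finite_without_strict_upper_empty:
  fixes T :: "'a::linorder set"
  assumes "finite T" and "\<And>t. t \<in> T \<Longrightarrow> \<exists>t'\<in>T. t < t'"
  shows "T = {}"
  using assms Max_in Max_ge by (metis leD)

lemma fixpoint_values_boolean:
  assumes "finite (x ` S)" and "\<And>w. w \<in> S \<Longrightarrow> x w \<in> {0..1}"
    and "\<And>w. w \<in> S \<Longrightarrow> \<exists>u\<in>S. x w = luk_prod (x u) (x u)"
    and "w \<in> S"
  shows "x w = 0 \<or> x w = 1"
proof -
  let ?T = "{x w | w. w \<in> S \<and> 0 < x w \<and> x w < 1}"
  have "?T = {}"
  proof (rule finite_without_strict_upper_empty)
    show "finite ?T" using assms(1) by (rule finite_subset[rotated]) blast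
  next
    fix t assume "t \<in> ?T"
    then obtain w where w: "w \<in> S" "0 < x w" "x w < 1" "t = x w" by blast
    then obtain u where "u \<in> S" "x w = luk_prod (x u) (x u)" using assms(3) by blast
    moreover have "x w < x u \<and> 0 < x u \<and> x u < 1"
      using w calculation assms(2)[of u] luk_square_interior_decreasing[of "x u"] by simp
    ultimately show "\<exists>t'\<in>?T. t < t'" using w(4) by blast
  qed
  then show ?thesis using assms(2,4) by fastforce
qed

lemma finite_valued_model_fixpoint_excluded_middle:
  assumes "finite A" and "A \<subseteq> {0..1}" and "trans_model A W R e" and "v \<in> W"
    and fix_v: "ev W R e (Iff (Var p) (Sq (Box (Var p)))) v = 1"
    and fix_succs: "ev W R e (Box (Iff (Var p) (Sq (Box (Var p))))) v = 1"
    and serial: "ev W R e (Neg (Dia (Box Zero))) v = 1"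
  shows "ev W R e (Disj (Neg (Var p)) (Var p)) v = 1"
proof -
  let ?x = "\<lambda>w. e w p" and ?S = "succs W R v"
  have R_trans: "trans R" and valued: "\<And>w. w \<in> W \<Longrightarrow> ?x w \<in> A"
    using assms(3) unfolding trans_model_def by auto
  have S_in_W: "?S \<subseteq> W" by (auto simp: succs_def)
  have finite_values: "finite (?x ` B)" if "B \<subseteq> W" for B
    using that valued by (intro finite_subset[OF _ assms(1)]) blast
  have box_attained: "\<exists>u\<in>succs W R w. ev W R e (Box (Var p)) w = ?x u"
    if "succs W R w \<noteq> {}" for w
  proof -
    have "finite (?x ` succs W R w)" by (rule finite_values) (auto simp: succs_def)
    from ev_Box_Var_attained[of W R w e p, OF that this] show ?thesis by blast
  qed
  have step: "\<exists>u\<in>?S. ?x w = luk_prod (?x u) (?x u)" if w: "w \<in> ?S" for w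
  proof -
    obtain u where "u \<in> succs W R w" "ev W R e (Box (Var p)) w = ?x u"
      using box_attained ev_Neg_Dia_Box_Zero_eq_oneD[OF serial w] by blast
    moreover have "?x w = luk_prod (ev W R e (Box (Var p)) w) (ev W R e (Box (Var p)) w)"
      using ev_Box_Iff_eq_oneD[OF fix_succs w] by (simp add: Sq_def)
    ultimately show ?thesis using succs_trans[OF R_trans w] by (metis subsetD)
  qed
  have unit_succs: "?x u \<in> {0..1}" if "u \<in> ?S" for u
    using valued[of u] that S_in_W assms(2) by blast
  have boolean_succs: "?x u = 0 \<or> ?x u = 1" if "u \<in> ?S" for u
    using fixpoint_values_boolean[of ?x ?S, OF finite_values[OF S_in_W] unit_succs step that] .
  have fix_v': "?x v = luk_prod (ev W R e (Box (Var p)) v) (ev W R e (Box (Var p)) v)"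
    using fix_v by (simp add: ev_Iff_eq_one_iff Sq_def)
  have "?x v = 0 \<or> ?x v = 1"
  proof (cases "?S = {}")
    case True
    then show ?thesis using fix_v' by (simp add: ev_Box_succs luk_prod_def)
  next
    case False
    then obtain u where u: "u \<in> ?S" "ev W R e (Box (Var p)) v = ?x u" using box_attained by blast
    then show ?thesis using fix_v' boolean_succs[OF u(1)] by (auto simp: luk_prod_def)
  qed
  then show ?thesis by (auto simp: Neg_def luk_imp_def)
qed

definition ladder :: "nat \<Rightarrow> real" where
  "ladder i = 1 - (1/2) ^ Suc i"

lemma ladder_in_unit_interval: "ladder i \<in> {0..1}"
  using power_le_one[of "1/2 :: real" "Suc i"] by (simp add: ladder_def)

lemma ladder_mono: "i \<le> j \<Longrightarrow> ladder i \<le> ladder j"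
  by (simp add: ladder_def power_decreasing)

lemma Inf_ladder_greater: "Inf (ladder ` {j. i < j}) = ladder (Suc i)"
  by (rule cInf_eq_minimum) (auto intro: ladder_mono)

lemma luk_square_ladder_Suc: "luk_prod (ladder (Suc i)) (ladder (Suc i)) = ladder i"
  using power_le_one[of "1/2 :: real" i] by (simp add: luk_prod_def ladder_def)

lemma ladder_model_fixpoint_not_excluded_middle:
  defines "W \<equiv> UNIV :: nat set" and "R \<equiv> {(i, j). i < j}" and "e \<equiv> \<lambda>i p. ladder i"
  shows "in_4K_L W R e"
    and "ev W R e (Iff (Var 0) (Sq (Box (Var 0)))) 0 = 1"
    and "ev W R e (Box (Iff (Var 0) (Sq (Box (Var 0))))) 0 = 1"
    and "ev W R e (Neg (Dia (Box Zero))) 0 = 1"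
    and "ev W R e (Disj (Neg (Var 0)) (Var 0)) 0 \<noteq> 1"
proof -
  have succs: "succs W R i = {j. i < j}" for i by (auto simp: succs_def W_def R_def)
  have nonempty: "succs W R i \<noteq> {}" for i unfolding succs by auto
  have box_x: "ev W R e (Box (Var 0)) i = ladder (Suc i)" for i
  proof -
    have "ev W R e (Box (Var 0)) i = Inf (ev W R e (Var 0) ` succs W R i)"
      using nonempty by (simp add: ev_Box_succs)
    then show ?thesis by (simp add: succs e_def Inf_ladder_greater)
  qed
  have fixpoint: "ev W R e (Iff (Var 0) (Sq (Box (Var 0)))) i = 1" for i
    unfolding ev_Iff_eq_one_iff Sq_def ev.simps(1,6) box_x
    by (simp add: luk_square_ladder_Suc e_def)
  show "in_4K_L W R e"
    using ladder_in_unit_interval by (auto simp: in_4K_L_def trans_model_def W_def R_def e_def trans_def)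
  show "ev W R e (Iff (Var 0) (Sq (Box (Var 0)))) 0 = 1" by (rule fixpoint)
  show "ev W R e (Box (Iff (Var 0) (Sq (Box (Var 0))))) 0 = 1"
    by (rule ev_Box_const[OF nonempty fixpoint])
  have "ev W R e (Box Zero) i = 0" for i by (rule ev_Box_const[OF nonempty]) simp
  then have "ev W R e (Dia (Box Zero)) 0 = 0" by (rule ev_Dia_const[OF nonempty])
  then show "ev W R e (Neg (Dia (Box Zero))) 0 = 1" by (simp add: Neg_def luk_imp_def)
  show "ev W R e (Disj (Neg (Var 0)) (Var 0)) 0 \<noteq> 1"
    by (simp add: Neg_def luk_imp_def e_def ladder_def)
qed

theorem mainTheorem5:
  shows "conseq TYPE('w) in_4K_omegaL
           {Iff (Var 0) (Sq (Box (Var 0))), Box (Iff (Var 0) (Sq (Box (Var 0)))), Neg (Dia (Box Zero))}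
           (Disj (Neg (Var 0)) (Var 0))
       \<and> \<not> conseq TYPE(nat) in_4K_L
           {Iff (Var 0) (Sq (Box (Var 0))), Box (Iff (Var 0) (Sq (Box (Var 0)))), Neg (Dia (Box Zero))}
           (Disj (Neg (Var 0)) (Var 0))"
proof
  show "conseq TYPE('w) in_4K_omegaL
           {Iff (Var 0) (Sq (Box (Var 0))), Box (Iff (Var 0) (Sq (Box (Var 0)))), Neg (Dia (Box Zero))}
           (Disj (Neg (Var 0)) (Var 0))"
    unfolding conseq_def
  proof (intro allI impI ballI)
    fix W :: "'w set" and R e v
    assume "in_4K_omegaL W R e" and "v \<in> W"
      and "\<forall>\<gamma>\<in>{Iff (Var 0) (Sq (Box (Var 0))), Box (Iff (Var 0) (Sq (Box (Var 0)))),
          Neg (Dia (Box Zero))}. ev W R e \<gamma> v = 1"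
    then show "ev W R e (Disj (Neg (Var 0)) (Var 0)) v = 1"
      unfolding in_4K_omegaL_def
      using finite_valued_model_fixpoint_excluded_middle[OF finite_MVn MVn_subset_unit_interval]
      by auto
  qed
  show "\<not> conseq TYPE(nat) in_4K_L
           {Iff (Var 0) (Sq (Box (Var 0))), Box (Iff (Var 0) (Sq (Box (Var 0)))), Neg (Dia (Box Zero))}
           (Disj (Neg (Var 0)) (Var 0))"
    unfolding conseq_def
    using ladder_model_fixpoint_not_excluded_middle
    by (intro notI) (metis (no_types, lifting) UNIV_I empty_iff insert_iff)
qed

end
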